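(* In the rebuilding game described in the context, there is a deterministic strategy for the player that finishes all $T$ rounds with total time cost $O\!\left(\frac{C_rKd}{\gamma_g}(m+T)\right)$.
   Context: Parameters: integers $m>0$ and $d>0$, update frequency $0<\gamma_g<1$, rebuilding cost $C_r\ge1$, weight range $K\ge1$, size reduction parameter $k=m^{1/d}\ge2$, and an integer number of rounds $T>0$. The game is played between a player and an adversary in rounds $t=1,\ldots,T$; the player's moves (steps) are indexed $s=1,2,\ldots$, and each step $s$ has an associated tuple $\mathrm{prev}^{(s)}=(\mathrm{prev}^{(s)}_0,\ldots,\mathrm{prev}^{(s)}_d)\in[T]^{d+1}$, known to both; initially $\mathrm{prev}^{(1)}_i=1$ for all levels $i\in\{0,\ldots,d\}$. At the start of each round $t$: (1) the adversary chooses a positive real weight $W^{(t)}$ with $\log W^{(t)}\in(-K,K)$, hidden from the player; (2) while either $\sum_{i=0}^dW^{(\mathrm{prev}^{(s)}_i)}>2(d+1)W^{(t)}$, or for some level $l$ at least $\gamma_gm/k^l$ rounds have passed since level $l$ was last rebuilt, the adversary may (but need not) force the player to perform a fixing step; the player may also perform fixing steps voluntarily at any time. In a fixing step the player picks a level $i$, and sets $\mathrm{prev}^{(s+1)}_j=t$ for $j\in\{i,\ldots,d\}$ and $\mathrm{prev}^{(s+1)}_j=\mathrm{prev}^{(s)}_j$ for $j<i$ (a fix at level $i$, which rebuilds levels $j\ge i$); this step costs $C_rm/k^i$. (3) The round finishes when the player no longer performs fixing steps. The total time cost is the sum of the costs of all fixing steps plus $O(1)$ per round. *)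

theory Defs
  imports Complex_Main
begin

text \<open>A fixing step is recorded as (round, level, forced?).\<close>
type_synonym step = "nat \<times> nat \<times> bool"

definition kpar :: "nat \<Rightarrow> nat \<Rightarrow> real" where
  "kpar m d = real m powr (1 / real d)"

text \<open>prev_j after the given history of fixing steps: the round of the last fix
  at a level i \<le> j (fix at level i rebuilds all levels j \<ge> i); initially 1.\<close>
definition prev_lvl :: "step list \<Rightarrow> nat \<Rightarrow> nat" where
  "prev_lvl h j = foldl (\<lambda>p (r, i, b). if i \<le> j then r else p) 1 h"

definition may_force ::
  "nat \<Rightarrow> nat \<Rightarrow> real \<Rightarrow> (nat \<Rightarrow> real) \<Rightarrow> nat \<Rightarrow> step list \<Rightarrow> bool" where
  "may_force m d \<gamma> W t h \<longleftrightarrow>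
     (\<Sum>i\<le>d. W (prev_lvl h i)) > 2 * (real d + 1) * W t
   \<or> (\<exists>l\<le>d. real t - real (prev_lvl h l) \<ge> \<gamma> * real m / kpar m d ^ l)"

text \<open>One transition of the game from configuration (t, h): t is the current round
  (t > T means the game is over), h is the full history of fixing steps so far.
  vol t h: the player's voluntary decision (Some i = fix at level i, None = stop);
  frc t h: the level the player picks when forced; F t h: adversary wishes to force
  (effective only if may_force holds).\<close>
definition game_step ::
  "nat \<Rightarrow> nat \<Rightarrow> real \<Rightarrow> nat \<Rightarrow>
   (nat \<Rightarrow> step list \<Rightarrow> nat option) \<Rightarrow> (nat \<Rightarrow> step list \<Rightarrow> nat) \<Rightarrow>
   (nat \<Rightarrow> real) \<Rightarrow> (nat \<Rightarrow> step list \<Rightarrow> bool) \<Rightarrow>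
   nat \<times> step list \<Rightarrow> nat \<times> step list" where
  "game_step m d \<gamma> T vol frc W F c =
     (case c of (t, h) \<Rightarrow>
       if T < t then (t, h)
       else (case vol t h of
               Some i \<Rightarrow> (t, h @ [(t, i, False)])
             | None \<Rightarrow> if F t h \<and> may_force m d \<gamma> W t h
                       then (t, h @ [(t, frc t h, True)])
                       else (Suc t, h)))"

definition game_config ::
  "nat \<Rightarrow> nat \<Rightarrow> real \<Rightarrow> nat \<Rightarrow>
   (nat \<Rightarrow> step list \<Rightarrow> nat option) \<Rightarrow> (nat \<Rightarrow> step list \<Rightarrow> nat) \<Rightarrow>
   (nat \<Rightarrow> real) \<Rightarrow> (nat \<Rightarrow> step list \<Rightarrow> bool) \<Rightarrow> nat \<Rightarrow> nat \<times> step list" where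
  "game_config m d \<gamma> T vol frc W F n = (game_step m d \<gamma> T vol frc W F ^^ n) (1, [])"

definition fix_cost :: "nat \<Rightarrow> nat \<Rightarrow> real \<Rightarrow> step list \<Rightarrow> real" where
  "fix_cost m d Cr h = sum_list (map (\<lambda>(r, i, b). Cr * real m / kpar m d ^ i) h)"

end

theory Submission
  imports Defs
begin

(*
  Strategy: as soon as some level l has gone gamma m / k^l rounds without a rebuild, fix the
  lowest such level ("periodic" fix). When forced, fix the highest level s that was not rebuilt
  in the current round and has taken fewer than B forced fixes since its last periodic rebuild
  (level 0 if there is none), where 2^B >= e^(2K).

  A periodic fix at level L costs C_r m / k^L and happens at most once per gamma m / k^L rounds,
  so it costs C_r / gamma per round and level. For forced fixes consider the prefix maxima
  M_j = max {W(prev_i) | i <= j}. The forcing condition gives some weight above 2 W(t); every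
  level above s was rebuilt in round t or has exhausted its B forced fixes, and by the counting
  invariant the latter carry no new prefix maximum, so M_s > 2 W(t). The fix replaces
  M_s by W(t): each forced fix at a level carrying a new prefix maximum halves it, and since all
  weights lie in (e^-K, e^K) this happens fewer than B times. A periodic rebuild at level L
  resets the counters above L, whose forced fixes cost at most 2 B C_r m / k^L as k >= 2; it
  pays for them, which makes the potential
    sum_j cost_j count_j + (1 + 2B) sum_L cost_L prev_L / period_L
  an upper bound for the cost so far. At the end of the game it is O(B C_r (m + d T / gamma)).
*)

lemma prev_lvl_Nil [simp]: "prev_lvl [] j = 1"
  by (simp add: prev_lvl_def)

lemma prev_lvl_snoc [simp]:
  "prev_lvl (h @ [(r, i, b)]) j = (if i \<le> j then r else prev_lvl h j)"
  by (simp add: prev_lvl_def)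

definition rebuild_cost :: "nat \<Rightarrow> nat \<Rightarrow> real \<Rightarrow> nat \<Rightarrow> real" where
  "rebuild_cost m d Cr i = Cr * real m / kpar m d ^ i"

lemma fix_cost_Nil [simp]: "fix_cost m d Cr [] = 0"
  by (simp add: fix_cost_def)

lemma fix_cost_snoc [simp]:
  "fix_cost m d Cr (h @ [(r, i, b)]) = fix_cost m d Cr h + rebuild_cost m d Cr i"
  by (simp add: fix_cost_def rebuild_cost_def)

definition forced_count :: "step list \<Rightarrow> nat \<Rightarrow> nat" where
  "forced_count h j =
     foldl (\<lambda>c (r, i, forced). if forced \<and> i = j then Suc c else if \<not> forced \<and> i \<le> j then 0 else c)
       0 h"

lemma forced_count_Nil [simp]: "forced_count [] j = 0"
  by (simp add: forced_count_def)

lemma forced_count_snoc [simp]: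
  "forced_count (h @ [(r, i, forced)]) j =
     (if forced \<and> i = j then Suc (forced_count h j)
      else if \<not> forced \<and> i \<le> j then 0 else forced_count h j)"
  by (simp add: forced_count_def)

fun prefix_max :: "(nat \<Rightarrow> 'a::linorder) \<Rightarrow> nat \<Rightarrow> 'a" where
  "prefix_max f 0 = f 0"
| "prefix_max f (Suc j) = max (prefix_max f j) (f (Suc j))"

lemma prefix_max_le_iff: "prefix_max f j \<le> c \<longleftrightarrow> (\<forall>i\<le>j. f i \<le> c)"
  by (induction j) (auto simp: le_Suc_eq)

lemma prefix_max_less_iff: "prefix_max f j < c \<longleftrightarrow> (\<forall>i\<le>j. f i < c)"
  by (induction j) (auto simp: le_Suc_eq)

lemma le_prefix_max: "i \<le> j \<Longrightarrow> f i \<le> prefix_max f j"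
  using prefix_max_le_iff[of f j "prefix_max f j"] by auto

lemma prefix_max_cong: "(\<And>i. i \<le> j \<Longrightarrow> f i = g i) \<Longrightarrow> prefix_max f j = prefix_max g j"
  by (induction j) auto

lemma prefix_max_const_tail:
  assumes "\<And>i. s \<le> i \<Longrightarrow> f i = c" and "s \<le> j"
  shows "prefix_max f j = (if s = 0 then c else max (prefix_max f (s - 1)) c)"
  using assms(2)
proof (induction j)
  case 0
  then show ?case using assms(1) by simp
next
  case (Suc j)
  show ?case
  proof (cases "s = Suc j")
    case True
    then show ?thesis using assms(1) by simp
  next
    case False
    with Suc show ?thesis using assms(1) by (auto simp: max_def)
  qed
qed

lemma prefix_max_le_max_skip:
  assumes "\<And>l. s < l \<Longrightarrow> l \<le> j \<Longrightarrow> f l \<le> c \<or> prefix_max f l \<le> prefix_max f (l - 1)"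
    and "s \<le> j"
  shows "prefix_max f j \<le> max (prefix_max f s) c"
  using assms
proof (induction j)
  case 0
  then show ?case by simp
next
  case (Suc j)
  show ?case
  proof (cases "s = Suc j")
    case False
    with Suc.prems have "prefix_max f j \<le> max (prefix_max f s) c"
      by (intro Suc.IH) auto
    with Suc.prems(1)[of "Suc j"] False Suc.prems(2) show ?thesis
      by (auto simp: max_def split: if_splits)
  qed simp
qed

(* P 0 is never tested: 0 is the fallback value. *)
fun greatest_upto :: "(nat \<Rightarrow> bool) \<Rightarrow> nat \<Rightarrow> nat" where
  "greatest_upto P 0 = 0"
| "greatest_upto P (Suc j) = (if P (Suc j) then Suc j else greatest_upto P j)"

lemma greatest_upto_le: "greatest_upto P n \<le> n"
  by (induction n) auto

lemma greatest_upto_holds: "0 < greatest_upto P n \<Longrightarrow> P (greatest_upto P n)"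
  by (induction n) (auto split: if_splits)

lemma greatest_upto_greatest: "greatest_upto P n < l \<Longrightarrow> l \<le> n \<Longrightarrow> \<not> P l"
  by (induction n) (auto simp: le_Suc_eq split: if_splits)

lemma sum_halving_tail_le:
  fixes c :: "nat \<Rightarrow> real"
  assumes nonneg: "\<And>i. 0 \<le> c i" and halving: "\<And>i. 2 * c (Suc i) \<le> c i"
  shows "(\<Sum>j=L..n. c j) \<le> 2 * c L"
proof (cases "L \<le> n")
  case True
  have "(\<Sum>j=L..n. c j) + c n \<le> 2 * c L" if "L \<le> n" for n
    using that
  proof (induction n)
    case (Suc n)
    show ?case
    proof (cases "L = Suc n")
      case False
      with Suc have "(\<Sum>j=L..n. c j) + c n \<le> 2 * c L" by simp
      with halving[of n] False Suc.prems show ?thesis by simp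
    qed simp
  qed simp
  with True nonneg[of n] show ?thesis by fastforce
qed (use nonneg in simp)

lemma funpow_terminates:
  fixes \<mu> :: "'a \<Rightarrow> nat"
  assumes "Q x" and "\<And>y. Q y \<Longrightarrow> \<not> P y \<Longrightarrow> Q (f y) \<and> \<mu> (f y) < \<mu> y"
  shows "\<exists>n. P ((f ^^ n) x) \<and> Q ((f ^^ n) x)"
  using assms(1)
proof (induction "\<mu> x" arbitrary: x rule: less_induct)
  case less
  show ?case
  proof (cases "P x")
    case True
    with less.prems show ?thesis by (intro exI[of _ 0]) simp
  next
    case False
    with less.prems assms(2) have "Q (f x)" "\<mu> (f x) < \<mu> x" by auto
    with less.hyps obtain n where "P ((f ^^ n) (f x)) \<and> Q ((f ^^ n) (f x))" by blast
    then show ?thesis by (intro exI[of _ "Suc n"]) (simp only: funpow_Suc_right comp_apply)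
  qed
qed

lemma exp_le_two_power: "exp (2 * real n) \<le> 2 ^ (4 * n)"
proof -
  have "exp (2 * real n) = exp 1 ^ (2 * n)" using exp_of_nat_mult[of "2 * n" 1] by simp
  also have "\<dots> \<le> 4 ^ (2 * n)" by (rule power_mono) (use exp_le in auto)
  also have "\<dots> = 2 ^ (4 * n)" by (simp add: power_mult flip: power_mult_distrib)
  finally show ?thesis .
qed

definition rebuild_due :: "nat \<Rightarrow> nat \<Rightarrow> real \<Rightarrow> nat \<Rightarrow> step list \<Rightarrow> nat \<Rightarrow> bool" where
  "rebuild_due m d \<gamma> t h l \<longleftrightarrow> \<gamma> * real m / kpar m d ^ l \<le> real t - real (prev_lvl h l)"

lemma may_force_iff:
  "may_force m d \<gamma> W t h \<longleftrightarrow>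
     2 * (real d + 1) * W t < (\<Sum>i\<le>d. W (prev_lvl h i)) \<or> (\<exists>l\<le>d. rebuild_due m d \<gamma> t h l)"
  by (simp add: may_force_def rebuild_due_def)

definition periodic_level :: "nat \<Rightarrow> nat \<Rightarrow> real \<Rightarrow> nat \<Rightarrow> step list \<Rightarrow> nat option" where
  "periodic_level m d \<gamma> t h =
     (if \<exists>l\<le>d. rebuild_due m d \<gamma> t h l
      then Some (LEAST l. l \<le> d \<and> rebuild_due m d \<gamma> t h l) else None)"

definition forced_level :: "nat \<Rightarrow> nat \<Rightarrow> nat \<Rightarrow> step list \<Rightarrow> nat" where
  "forced_level d B t h = greatest_upto (\<lambda>j. prev_lvl h j \<noteq> t \<and> forced_count h j < B) d"

lemma periodic_level_SomeD:
  "periodic_level m d \<gamma> t h = Some L \<Longrightarrow> L \<le> d \<and> rebuild_due m d \<gamma> t h L"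
  unfolding periodic_level_def by (metis (mono_tags, lifting) LeastI_ex option.distinct(1) option.inject)

lemma periodic_level_None_iff:
  "periodic_level m d \<gamma> t h = None \<longleftrightarrow> \<not> (\<exists>l\<le>d. rebuild_due m d \<gamma> t h l)"
  by (simp add: periodic_level_def)

lemma may_force_when_not_due:
  assumes "periodic_level m d \<gamma> t h = None" and "may_force m d \<gamma> W t h"
  shows "2 * (real d + 1) * W t < (\<Sum>i\<le>d. W (prev_lvl h i))"
  using assms unfolding may_force_iff periodic_level_None_iff by blast

lemma forced_level_le: "forced_level d B t h \<le> d"
  unfolding forced_level_def by (rule greatest_upto_le)

lemma forced_level_pos:
  assumes "0 < forced_level d B t h"
  shows "prev_lvl h (forced_level d B t h) \<noteq> t \<and> forced_count h (forced_level d B t h) < B"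
  using assms greatest_upto_holds[of "\<lambda>j. prev_lvl h j \<noteq> t \<and> forced_count h j < B" d]
  unfolding forced_level_def by simp

lemma above_forced_level:
  assumes "forced_level d B t h < l" and "l \<le> d"
  shows "prev_lvl h l = t \<or> B \<le> forced_count h l"
  using assms greatest_upto_greatest unfolding forced_level_def by fastforce

definition game_measure :: "nat \<Rightarrow> nat \<Rightarrow> nat \<times> step list \<Rightarrow> nat" where
  "game_measure T d =
     (\<lambda>(t, h). (Suc T - t) * (d + 2) + card {j. j \<le> d \<and> prev_lvl h j \<noteq> t})"

lemma game_measure_fix_less:
  assumes "s \<le> d" and "prev_lvl h s \<noteq> t"
  shows "game_measure T d (t, h @ [(t, s, b)]) < game_measure T d (t, h)"
proof -
  have "{j. j \<le> d \<and> prev_lvl (h @ [(t, s, b)]) j \<noteq> t} \<subset> {j. j \<le> d \<and> prev_lvl h j \<noteq> t}"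
    using assms by auto
  then have "card {j. j \<le> d \<and> prev_lvl (h @ [(t, s, b)]) j \<noteq> t} < card {j. j \<le> d \<and> prev_lvl h j \<noteq> t}"
    by (rule psubset_card_mono[rotated]) simp
  then show ?thesis by (simp add: game_measure_def)
qed

lemma game_measure_next_round_less:
  assumes "t \<le> T"
  shows "game_measure T d (Suc t, h) < game_measure T d (t, h)"
proof -
  have "card {j. j \<le> d \<and> prev_lvl h j \<noteq> Suc t} \<le> card {..d}"
    by (rule card_mono) auto
  with assms show ?thesis by (simp add: game_measure_def Suc_diff_le)
qed

locale rebuilding_game =
  fixes m d :: nat and \<gamma> Cr K :: real and T B :: nat
    and W :: "nat \<Rightarrow> real" and F :: "nat \<Rightarrow> step list \<Rightarrow> bool"
  assumes m_pos: "0 < m" and \<gamma>_pos: "0 < \<gamma>" and Cr_pos: "0 < Cr" and k_ge_2: "2 \<le> kpar m d"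
    and T_pos: "0 < T"
    and W_range: "\<And>i. i \<in> {1..T} \<Longrightarrow> exp (- K) < W i \<and> W i < exp K"
    and B_large: "exp (2 * K) \<le> 2 ^ B"
begin

abbreviation cost :: "nat \<Rightarrow> real" where
  "cost \<equiv> rebuild_cost m d Cr"

abbreviation wmax :: "step list \<Rightarrow> nat \<Rightarrow> real" where
  "wmax h \<equiv> prefix_max (\<lambda>i. W (prev_lvl h i))"

definition period :: "nat \<Rightarrow> real" where
  "period L = max 1 (\<gamma> * real m / kpar m d ^ L)"

definition count_potential :: "step list \<Rightarrow> real" where
  "count_potential h = (\<Sum>j\<le>d. cost j * forced_count h j)"

definition rebuild_potential :: "step list \<Rightarrow> real" where
  "rebuild_potential h = (\<Sum>L\<le>d. cost L * prev_lvl h L / period L)"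

definition potential :: "step list \<Rightarrow> real" where
  "potential h = count_potential h + (1 + 2 * real B) * rebuild_potential h"

definition rounds_ok :: "nat \<Rightarrow> step list \<Rightarrow> bool" where
  "rounds_ok t h \<longleftrightarrow> (\<forall>j. 1 \<le> prev_lvl h j \<and> prev_lvl h j \<le> t \<and> prev_lvl h j \<le> T)"

definition raises_max :: "step list \<Rightarrow> nat \<Rightarrow> bool" where
  "raises_max h j \<longleftrightarrow> j = 0 \<or> wmax h (j - 1) < wmax h j"

definition count_ok :: "step list \<Rightarrow> nat \<Rightarrow> bool" where
  "count_ok h j \<longleftrightarrow>
     (if raises_max h j then wmax h j * 2 ^ forced_count h j < exp K else forced_count h j \<le> B)"

definition game_inv :: "nat \<times> step list \<Rightarrow> bool" where
  "game_inv =
     (\<lambda>(t, h). rounds_ok t h \<and> (\<forall>j\<le>d. count_ok h j) \<and> fix_cost m d Cr h \<le> potential h)"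

lemma cost_pos: "0 < cost i"
  using m_pos Cr_pos k_ge_2 by (simp add: rebuild_cost_def)

lemma sum_cost_le: "(\<Sum>j=L..n. cost j) \<le> 2 * cost L"
proof (rule sum_halving_tail_le)
  fix i
  have "cost (Suc i) = cost i / kpar m d"
    by (simp add: rebuild_cost_def)
  also have "\<dots> \<le> cost i / 2"
    using cost_pos[of i] k_ge_2 by (intro divide_left_mono) auto
  finally show "2 * cost (Suc i) \<le> cost i" by simp
qed (use cost_pos less_imp_le in blast)

lemma period_pos: "0 < period L"
  by (simp add: period_def)

lemma cost_le_period: "cost L \<le> Cr / \<gamma> * period L"
proof -
  have "cost L = Cr / \<gamma> * (\<gamma> * real m / kpar m d ^ L)"
    using \<gamma>_pos by (simp add: rebuild_cost_def)
  also have "\<dots> \<le> Cr / \<gamma> * period L"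
    unfolding period_def using Cr_pos \<gamma>_pos by (intro mult_left_mono) auto
  finally show ?thesis .
qed

lemma due_level_stale:
  assumes "rebuild_due m d \<gamma> t h L"
  shows "prev_lvl h L < t \<and> period L \<le> real t - real (prev_lvl h L)"
proof -
  have "0 < \<gamma> * real m / kpar m d ^ L"
    using \<gamma>_pos m_pos k_ge_2 by simp
  with assms have "prev_lvl h L < t"
    by (simp add: rebuild_due_def)
  with assms show ?thesis
    by (simp add: rebuild_due_def period_def)
qed

lemma rounds_ok_fix:
  assumes "rounds_ok t h" and "t \<le> T"
  shows "rounds_ok t (h @ [(t, i, b)])"
proof -
  have "1 \<le> t"
    using assms(1) unfolding rounds_ok_def by (meson le_trans)
  with assms show ?thesis
    by (simp add: rounds_ok_def)
qed

lemma rounds_ok_next_round: "rounds_ok t h \<Longrightarrow> rounds_ok (Suc t) h"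
  unfolding rounds_ok_def by (meson le_SucI)

lemma weight_range:
  assumes "rounds_ok t h"
  shows "exp (- K) < W (prev_lvl h i) \<and> W (prev_lvl h i) < exp K"
  using assms W_range by (simp add: rounds_ok_def)

lemma weight_pos: "rounds_ok t h \<Longrightarrow> t \<le> T \<Longrightarrow> 0 < W t"
  using W_range[of t] unfolding rounds_ok_def
  by (metis atLeastAtMost_iff exp_gt_zero le_trans order.strict_trans)

lemma wmax_range:
  assumes "rounds_ok t h"
  shows "exp (- K) < wmax h j \<and> wmax h j < exp K"
  using weight_range[OF assms] le_prefix_max[of 0 j, where f = "\<lambda>i. W (prev_lvl h i)"]
  by (simp add: prefix_max_less_iff) (meson less_le_trans)

lemma raises_max_count_below_budget:
  assumes "rounds_ok t h" and "count_ok h j" and "raises_max h j"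
  shows "forced_count h j < B"
proof -
  have "exp (- K) * 2 ^ forced_count h j < wmax h j * 2 ^ forced_count h j"
    using wmax_range[OF assms(1)] by (intro mult_strict_right_mono) auto
  also have "\<dots> < exp K"
    using assms(2,3) by (simp add: count_ok_def)
  finally have "exp (- K) * 2 ^ forced_count h j < exp K" .
  then have "(2::real) ^ forced_count h j < exp (2 * K)"
    by (simp add: exp_minus field_simps flip: exp_add)
  with B_large have "(2::real) ^ forced_count h j < 2 ^ B"
    by linarith
  then show ?thesis by simp
qed

lemma count_le_budget: "rounds_ok t h \<Longrightarrow> count_ok h j \<Longrightarrow> forced_count h j \<le> B"
  using raises_max_count_below_budget[of t h j] by (cases "raises_max h j") (auto simp: count_ok_def)

lemma wmax_fix_below: "j < s \<Longrightarrow> wmax (h @ [(t, s, b)]) j = wmax h j"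
  by (rule prefix_max_cong) simp

lemma wmax_fix_above:
  assumes "s \<le> j"
  shows "wmax (h @ [(t, s, b)]) j = (if s = 0 then W t else max (wmax h (s - 1)) (W t))"
proof -
  have "wmax (h @ [(t, s, b)]) j
          = (if s = 0 then W t else max (wmax (h @ [(t, s, b)]) (s - 1)) (W t))"
    using assms by (intro prefix_max_const_tail) auto
  moreover have "0 < s \<Longrightarrow> wmax (h @ [(t, s, b)]) (s - 1) = wmax h (s - 1)"
    by (rule wmax_fix_below) simp
  ultimately show ?thesis
    by (simp del: prev_lvl_snoc)
qed

lemma count_ok_fix_below:
  "j < s \<Longrightarrow> count_ok (h @ [(t, s, b)]) j \<longleftrightarrow> count_ok h j"
  by (simp del: prev_lvl_snoc add: count_ok_def raises_max_def wmax_fix_below)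

lemma count_ok_periodic_fix:
  assumes "rounds_ok t h" and "t \<le> T" and "count_ok h j"
  shows "count_ok (h @ [(t, L, False)]) j"
proof (cases "L \<le> j")
  case True
  have "wmax (h @ [(t, L, False)]) j < exp K"
    using wmax_range[OF rounds_ok_fix[OF assms(1,2)]] by blast
  with True show ?thesis
    by (simp add: count_ok_def del: prev_lvl_snoc)
next
  case False
  with assms(3) show ?thesis
    by (simp add: count_ok_fix_below)
qed

lemma forced_charge_le:
  assumes "rounds_ok t h" and "\<forall>j\<le>d. count_ok h j"
  shows "(\<Sum>j=L..d. cost j * forced_count h j) \<le> 2 * real B * cost L"
proof -
  have "(\<Sum>j=L..d. cost j * forced_count h j) \<le> (\<Sum>j=L..d. real B * cost j)"
    using assms count_le_budget cost_pos
    by (intro sum_mono) (simp add: mult.commute less_imp_le mult_right_mono)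
  also have "\<dots> \<le> real B * (2 * cost L)"
    unfolding sum_distrib_left[symmetric] using sum_cost_le by (intro mult_left_mono) auto
  finally show ?thesis by simp
qed

lemma count_potential_periodic_fix:
  assumes "rounds_ok t h" and "\<forall>j\<le>d. count_ok h j"
  shows "count_potential h \<le> count_potential (h @ [(t, L, False)]) + 2 * real B * cost L"
proof -
  let ?c = "\<lambda>j. cost j * forced_count h j"
  have tail: "{j\<in>{..d}. L \<le> j} = {L..d}"
    by auto
  have "count_potential h
          = count_potential (h @ [(t, L, False)]) + (\<Sum>j\<le>d. if L \<le> j then ?c j else 0)"
    unfolding count_potential_def sum.distrib[symmetric] by (rule sum.cong) auto
  also have "(\<Sum>j\<le>d. if L \<le> j then ?c j else 0) = (\<Sum>j=L..d. ?c j)"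
    unfolding tail[symmetric] by (rule sum.inter_filter[symmetric]) simp
  also have "\<dots> \<le> 2 * real B * cost L"
    by (rule forced_charge_le[OF assms])
  finally show ?thesis by simp
qed

lemma count_potential_forced_fix:
  assumes "s \<le> d"
  shows "count_potential (h @ [(t, s, True)]) = count_potential h + cost s"
proof -
  have "count_potential (h @ [(t, s, True)])
          = (\<Sum>j\<le>d. cost j * forced_count h j + (if j = s then cost j else 0))"
    unfolding count_potential_def by (rule sum.cong) (auto simp: algebra_simps)
  with assms show ?thesis
    by (simp add: sum.distrib count_potential_def)
qed

lemma rebuild_term_fix_mono:
  assumes "rounds_ok t h"
  shows "cost L * prev_lvl h L / period L \<le> cost L * prev_lvl (h @ [(t, i, b)]) L / period L"
proof -
  have "prev_lvl h L \<le> prev_lvl (h @ [(t, i, b)]) L"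
    using assms by (simp add: rounds_ok_def)
  with cost_pos[of L] period_pos[of L] show ?thesis
    by (intro divide_right_mono mult_left_mono) (auto simp del: prev_lvl_snoc)
qed

lemma rebuild_potential_forced_fix:
  "rounds_ok t h \<Longrightarrow> rebuild_potential h \<le> rebuild_potential (h @ [(t, s, b)])"
  unfolding rebuild_potential_def by (intro sum_mono rebuild_term_fix_mono)

lemma rebuild_potential_periodic_fix:
  assumes "rounds_ok t h" and "L \<le> d" and "rebuild_due m d \<gamma> t h L"
  shows "rebuild_potential h + cost L \<le> rebuild_potential (h @ [(t, L, b)])"
proof -
  let ?g = "\<lambda>h i. cost i * prev_lvl h i / period i"
  have "cost L * period L \<le> cost L * (real t - real (prev_lvl h L))"
    using due_level_stale[OF assms(3)] cost_pos[of L] by (intro mult_left_mono) auto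
  then have "cost L \<le> cost L * (real t - real (prev_lvl h L)) / period L"
    using period_pos[of L] by (simp add: le_divide_eq)
  also have "\<dots> = ?g (h @ [(t, L, b)]) L - ?g h L"
    by (simp add: diff_divide_distrib right_diff_distrib)
  also have "\<dots> \<le> (\<Sum>i\<le>d. ?g (h @ [(t, L, b)]) i - ?g h i)"
    using assms(2) rebuild_term_fix_mono[OF assms(1)]
    by (intro member_le_sum) (auto simp del: prev_lvl_snoc)
  also have "\<dots> = rebuild_potential (h @ [(t, L, b)]) - rebuild_potential h"
    by (simp only: rebuild_potential_def sum_subtractf)
  finally show ?thesis by simp
qed

lemma potential_periodic_fix:
  assumes "rounds_ok t h" and "\<forall>j\<le>d. count_ok h j"
    and "L \<le> d" and "rebuild_due m d \<gamma> t h L"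
  shows "potential h + cost L \<le> potential (h @ [(t, L, False)])"
proof -
  have "(1 + 2 * real B) * (rebuild_potential h + cost L)
          \<le> (1 + 2 * real B) * rebuild_potential (h @ [(t, L, False)])"
    using rebuild_potential_periodic_fix[OF assms(1,3,4)] by (intro mult_left_mono) auto
  with count_potential_periodic_fix[OF assms(1,2), of L] show ?thesis
    unfolding potential_def by (simp add: algebra_simps)
qed

lemma game_inv_periodic_fix:
  assumes "game_inv (t, h)" and "t \<le> T" and "periodic_level m d \<gamma> t h = Some L"
  shows "game_inv (t, h @ [(t, L, False)])"
proof -
  from assms(1) have rounds: "rounds_ok t h" and counts: "\<forall>j\<le>d. count_ok h j"
    and paid: "fix_cost m d Cr h \<le> potential h"
    by (simp_all add: game_inv_def)
  from assms(3) have due: "L \<le> d" "rebuild_due m d \<gamma> t h L"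
    by (simp_all add: periodic_level_SomeD)
  have "fix_cost m d Cr (h @ [(t, L, False)]) \<le> potential (h @ [(t, L, False)])"
    using paid potential_periodic_fix[OF rounds counts due]
    unfolding fix_cost_snoc by linarith
  with rounds_ok_fix[OF rounds assms(2)] count_ok_periodic_fix[OF rounds assms(2)] counts
  show ?thesis
    by (simp add: game_inv_def del: prev_lvl_snoc)
qed

context
  fixes t h
  assumes rounds: "rounds_ok t h" and t_le: "t \<le> T" and counts: "\<forall>j\<le>d. count_ok h j"
    and heavy: "2 * (real d + 1) * W t < (\<Sum>i\<le>d. W (prev_lvl h i))"
begin

lemma forced_level_heavy: "2 * W t < wmax h (forced_level d B t h)"
proof (rule ccontr)
  let ?s = "forced_level d B t h"
  assume "\<not> 2 * W t < wmax h ?s"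
  moreover have "wmax h d \<le> max (wmax h ?s) (W t)"
  proof (rule prefix_max_le_max_skip)
    fix l
    assume "?s < l" and "l \<le> d"
    then have "prev_lvl h l = t \<or> B \<le> forced_count h l"
      by (rule above_forced_level)
    moreover have "B \<le> forced_count h l \<Longrightarrow> \<not> raises_max h l"
      using raises_max_count_below_budget[OF rounds] counts \<open>l \<le> d\<close> by fastforce
    ultimately show "W (prev_lvl h l) \<le> W t \<or> wmax h l \<le> wmax h (l - 1)"
      unfolding raises_max_def by auto
  qed (rule forced_level_le)
  ultimately have "wmax h d \<le> 2 * W t"
    using weight_pos[OF rounds t_le] by linarith
  then have "\<forall>i\<le>d. W (prev_lvl h i) \<le> 2 * W t"
    by (simp add: prefix_max_le_iff)
  then have "(\<Sum>i\<le>d. W (prev_lvl h i)) \<le> (\<Sum>i\<le>d. 2 * W t)"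
    by (intro sum_mono) simp
  with heavy show False
    by (simp add: algebra_simps)
qed

lemma forced_level_stale: "prev_lvl h (forced_level d B t h) \<noteq> t"
proof (cases "forced_level d B t h = 0")
  case True
  then show ?thesis
    using forced_level_heavy weight_pos[OF rounds t_le] by auto
next
  case False
  then show ?thesis
    using forced_level_pos by blast
qed

lemma count_ok_forced_fix_at_level:
  "count_ok (h @ [(t, forced_level d B t h, True)]) (forced_level d B t h)"
proof -
  define s where "s = forced_level d B t h"
  define h' where "h' = h @ [(t, s, True)]"
  have heavy_s: "2 * W t < wmax h s"
    unfolding s_def by (rule forced_level_heavy)
  have "count_ok h' s"
  proof (cases "raises_max h' s")
    case True
    have "s = 0 \<or> wmax h (s - 1) < W t"
    proof (cases "s = 0")
      case False
      then have "wmax h' (s - 1) = wmax h (s - 1)"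
        unfolding h'_def by (intro wmax_fix_below) simp
      with True False show ?thesis
        unfolding h'_def raises_max_def by (simp add: wmax_fix_above del: prev_lvl_snoc)
    qed simp
    moreover from this have new_max: "wmax h' s = W t"
      unfolding h'_def by (auto simp add: wmax_fix_above simp del: prev_lvl_snoc)
    ultimately have "raises_max h s"
      unfolding raises_max_def using heavy_s weight_pos[OF rounds t_le] by auto
    then have "wmax h s * 2 ^ forced_count h s < exp K"
      using counts forced_level_le unfolding count_ok_def s_def by auto
    moreover have "wmax h' s * 2 ^ forced_count h' s < wmax h s * 2 ^ forced_count h s"
      using new_max heavy_s unfolding h'_def by simp
    ultimately show ?thesis
      using True by (simp add: count_ok_def)
  next
    case False
    then have "0 < s"
      unfolding raises_max_def by simp
    with False show ?thesis
      using forced_level_pos unfolding h'_def s_def count_ok_def by (simp add: Suc_leI)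
  qed
  then show ?thesis
    unfolding h'_def s_def .
qed

lemma count_ok_forced_fix:
  assumes "j \<le> d"
  shows "count_ok (h @ [(t, forced_level d B t h, True)]) j"
proof -
  let ?s = "forced_level d B t h"
  consider "j < ?s" | "?s < j" | "j = ?s"
    by linarith
  then show ?thesis
  proof cases
    case 1
    with counts assms show ?thesis
      by (simp add: count_ok_fix_below)
  next
    case 2
    then have "\<not> raises_max (h @ [(t, ?s, True)]) j"
      unfolding raises_max_def by (simp add: wmax_fix_above del: prev_lvl_snoc)
    moreover have "forced_count (h @ [(t, ?s, True)]) j \<le> B"
      using 2 count_le_budget[OF rounds] counts assms by simp
    ultimately show ?thesis
      by (simp add: count_ok_def)
  next
    case 3
    then show ?thesis
      using count_ok_forced_fix_at_level by simp
  qed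
qed

end

lemma game_inv_forced_fix:
  assumes "game_inv (t, h)" and "t \<le> T"
    and "periodic_level m d \<gamma> t h = None" and "may_force m d \<gamma> W t h"
  shows "game_inv (t, h @ [(t, forced_level d B t h, True)])"
proof -
  let ?s = "forced_level d B t h"
  from assms(1) have rounds: "rounds_ok t h" and counts: "\<forall>j\<le>d. count_ok h j"
    and paid: "fix_cost m d Cr h \<le> potential h"
    by (simp_all add: game_inv_def)
  note heavy = may_force_when_not_due[OF assms(3,4)]
  have "(1 + 2 * real B) * rebuild_potential h
          \<le> (1 + 2 * real B) * rebuild_potential (h @ [(t, ?s, True)])"
    using rebuild_potential_forced_fix[OF rounds] by (intro mult_left_mono) auto
  with paid count_potential_forced_fix[OF forced_level_le[of d B t h], of h t]
  have "fix_cost m d Cr (h @ [(t, ?s, True)]) \<le> potential (h @ [(t, ?s, True)])"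
    unfolding potential_def fix_cost_snoc by linarith
  with rounds_ok_fix[OF rounds assms(2)] count_ok_forced_fix[OF rounds assms(2) counts heavy]
  show ?thesis
    by (simp add: game_inv_def del: prev_lvl_snoc)
qed

lemma game_inv_init: "game_inv (1, [])"
proof -
  have rounds: "rounds_ok 1 []"
    using T_pos by (simp add: rounds_ok_def)
  then have "count_ok [] j" for j
    using wmax_range[OF rounds, of j] by (simp add: count_ok_def)
  moreover have "0 \<le> potential []"
    unfolding potential_def count_potential_def rebuild_potential_def
    using cost_pos period_pos by (simp add: less_imp_le sum_nonneg)
  ultimately show ?thesis
    using rounds by (simp add: game_inv_def)
qed

abbreviation step :: "nat \<times> step list \<Rightarrow> nat \<times> step list" where
  "step \<equiv> game_step m d \<gamma> T (periodic_level m d \<gamma>) (forced_level d B) W F"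

lemma game_inv_step:
  assumes "game_inv (t, h)" and "t \<le> T"
  shows "game_inv (step (t, h)) \<and> game_measure T d (step (t, h)) < game_measure T d (t, h)"
proof (cases "periodic_level m d \<gamma> t h")
  case (Some L)
  then have "L \<le> d" and "prev_lvl h L \<noteq> t"
    using periodic_level_SomeD due_level_stale by fastforce+
  with game_inv_periodic_fix[OF assms Some] game_measure_fix_less show ?thesis
    using assms(2) Some by (simp add: game_step_def del: prev_lvl_snoc)
next
  case None
  show ?thesis
  proof (cases "F t h \<and> may_force m d \<gamma> W t h")
    case True
    with None have "2 * (real d + 1) * W t < (\<Sum>i\<le>d. W (prev_lvl h i))"
      using may_force_when_not_due by blast
    with assms have "prev_lvl h (forced_level d B t h) \<noteq> t"
      by (intro forced_level_stale) (simp_all add: game_inv_def)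
    with game_inv_forced_fix[OF assms None] forced_level_le game_measure_fix_less show ?thesis
      using assms(2) None True by (simp add: game_step_def del: prev_lvl_snoc)
  next
    case False
    from assms(1) have "game_inv (Suc t, h)"
      by (simp add: game_inv_def rounds_ok_next_round)
    moreover have "step (t, h) = (Suc t, h)"
      using assms(2) None False by (auto simp: game_step_def)
    ultimately show ?thesis
      using game_measure_next_round_less[OF assms(2)] by simp
  qed
qed

lemma potential_le_budget:
  assumes "rounds_ok t h" and "\<forall>j\<le>d. count_ok h j"
  shows "potential h \<le> 2 * real B * (Cr * m) + (1 + 2 * real B) * ((real d + 1) * (Cr / \<gamma> * T))"
proof -
  have "count_potential h \<le> 2 * real B * cost 0"
    unfolding count_potential_def atMost_atLeast0 by (rule forced_charge_le[OF assms])
  then have count: "count_potential h \<le> 2 * real B * (Cr * m)"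
    by (simp add: rebuild_cost_def)
  have "cost L * prev_lvl h L / period L \<le> Cr / \<gamma> * T" for L
  proof -
    have "cost L * prev_lvl h L \<le> Cr / \<gamma> * period L * T"
      using cost_le_period[of L] cost_pos[of L] assms(1)
      by (intro mult_mono) (auto simp: rounds_ok_def)
    then show ?thesis
      using period_pos[of L] by (simp add: divide_le_eq mult_ac)
  qed
  then have "rebuild_potential h \<le> real (card {..d}) * (Cr / \<gamma> * T)"
    unfolding rebuild_potential_def by (intro sum_bounded_above)
  then have "rebuild_potential h \<le> (real d + 1) * (Cr / \<gamma> * T)"
    by (simp only: card_atMost of_nat_Suc add.commute)
  then have "(1 + 2 * real B) * rebuild_potential h
               \<le> (1 + 2 * real B) * ((real d + 1) * (Cr / \<gamma> * T))"
    by (intro mult_left_mono) auto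
  with count show ?thesis
    unfolding potential_def by linarith
qed

theorem strategy_within_budget:
  "\<exists>n. T < fst (game_config m d \<gamma> T (periodic_level m d \<gamma>) (forced_level d B) W F n) \<and>
     fix_cost m d Cr (snd (game_config m d \<gamma> T (periodic_level m d \<gamma>) (forced_level d B) W F n))
       \<le> 2 * real B * (Cr * m) + (1 + 2 * real B) * ((real d + 1) * (Cr / \<gamma> * T))"
proof -
  have "\<exists>n. (\<lambda>c. T < fst c) ((step ^^ n) (1, [])) \<and> game_inv ((step ^^ n) (1, []))"
    using game_inv_init game_inv_step
    by (intro funpow_terminates[where \<mu> = "game_measure T d"]) (auto simp: not_less)
  then obtain n where "T < fst ((step ^^ n) (1, []))" and "game_inv ((step ^^ n) (1, []))"
    by blast
  moreover obtain t h where "(step ^^ n) (1, []) = (t, h)"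
    by fastforce
  ultimately have "T < t" and "rounds_ok t h" and "\<forall>j\<le>d. count_ok h j"
    and "fix_cost m d Cr h \<le> potential h"
    by (simp_all add: game_inv_def)
  with potential_le_budget \<open>(step ^^ n) (1, []) = (t, h)\<close> show ?thesis
    unfolding game_config_def by (intro exI[of _ n]) (auto intro: order_trans)
qed

end

lemma exists_budget_exponent:
  assumes "1 \<le> K"
  shows "\<exists>B::nat. exp (2 * K) \<le> 2 ^ B \<and> real B \<le> 8 * K"
proof (intro exI conjI)
  let ?n = "nat \<lceil>K\<rceil>"
  have "exp (2 * K) \<le> exp (2 * real ?n)"
    using assms by simp
  also have "\<dots> \<le> 2 ^ (4 * ?n)"
    by (rule exp_le_two_power)
  finally show "exp (2 * K) \<le> 2 ^ (4 * ?n)" .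
  show "real (4 * ?n) \<le> 8 * K"
    using assms of_int_ceiling_le_add_one[of K] by simp linarith
qed

lemma budget_le_linear:
  fixes m T B d :: nat and K Cr \<gamma> :: real
  assumes "real B \<le> 8 * K" and "1 \<le> K" and "1 \<le> Cr" and "0 < \<gamma>" and "\<gamma> < 1" and "0 < d"
  shows "2 * real B * (Cr * m) + (1 + 2 * real B) * ((real d + 1) * (Cr / \<gamma> * T)) + T
           \<le> 35 * (Cr * K * real d / \<gamma>) * (real m + real T)"
proof -
  define Y where "Y = Cr * K * real d / \<gamma>"
  have "1 \<le> real d / \<gamma>"
    using assms by (simp add: field_simps)
  then have CK_le_Y: "Cr * K \<le> Y"
    unfolding Y_def using assms mult_left_mono[of 1 "real d / \<gamma>" "Cr * K"] by simp
  have "2 * real B * (Cr * m) \<le> (16 * K) * (Cr * m)"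
    using assms by (intro mult_right_mono) auto
  also have "\<dots> = 16 * ((Cr * K) * m)"
    by (simp add: ac_simps)
  also have "\<dots> \<le> 16 * (Y * m)"
    using CK_le_Y by (simp add: mult_right_mono)
  finally have m_part: "2 * real B * (Cr * m) \<le> 16 * (Y * m)" .
  have "(1 + 2 * real B) * ((real d + 1) * (Cr / \<gamma> * T)) \<le> (17 * K) * (2 * real d * (Cr / \<gamma> * T))"
    using assms by (intro mult_mono) auto
  also have "\<dots> = 34 * Y * T"
    unfolding Y_def by simp
  finally have T_part: "(1 + 2 * real B) * ((real d + 1) * (Cr / \<gamma> * T)) \<le> 34 * Y * T" .
  have "1 \<le> Y"
    using CK_le_Y assms mult_mono[of 1 Cr 1 K] by simp
  then have "real T \<le> Y * T" and "0 \<le> Y * m"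
    using mult_right_mono[of 1 Y "real T"] by simp_all
  with m_part T_part show ?thesis
    unfolding Y_def[symmetric] by (simp add: algebra_simps)
qed

theorem lemma8p3:
  "\<exists>c>0. \<forall>(m::nat) (d::nat) (\<gamma>::real) (Cr::real) (K::real) (T::nat).
     m > 0 \<longrightarrow> d > 0 \<longrightarrow> 0 < \<gamma> \<longrightarrow> \<gamma> < 1 \<longrightarrow> Cr \<ge> 1 \<longrightarrow> K \<ge> 1 \<longrightarrow>
     kpar m d \<ge> 2 \<longrightarrow> T > 0 \<longrightarrow>
     (\<exists>(vol :: nat \<Rightarrow> step list \<Rightarrow> nat option) (frc :: nat \<Rightarrow> step list \<Rightarrow> nat).
        (\<forall>t h i. vol t h = Some i \<longrightarrow> i \<le> d) \<and> (\<forall>t h. frc t h \<le> d) \<and>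
        (\<forall>(W :: nat \<Rightarrow> real) (F :: nat \<Rightarrow> step list \<Rightarrow> bool).
           (\<forall>t\<in>{1..T}. W t > 0 \<and> - K < ln (W t) \<and> ln (W t) < K) \<longrightarrow>
           (\<exists>n. T < fst (game_config m d \<gamma> T vol frc W F n) \<and>
                fix_cost m d Cr (snd (game_config m d \<gamma> T vol frc W F n)) + real T
                  \<le> c * (Cr * K * real d / \<gamma>) * (real m + real T))))"
proof (intro exI[of _ "35::real"] conjI allI impI, goal_cases)
  case 1
  show ?case by simp
next
  case (2 m d \<gamma> Cr K T)
  obtain B where B_large: "exp (2 * K) \<le> 2 ^ B" and B_le: "real B \<le> 8 * K"
    using exists_budget_exponent 2 by blast
  show ?case
  proof (intro exI[of _ "periodic_level m d \<gamma>"] exI[of _ "forced_level d B"] conjI allI impI,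
      goal_cases)
    case (1 t h i)
    then show ?case by (simp add: periodic_level_SomeD)
  next
    case (2 t h)
    show ?case by (rule forced_level_le)
  next
    case (3 W F)
    have "exp (- K) < W i \<and> W i < exp K" if "i \<in> {1..T}" for i
      using 3 that by (metis exp_less_cancel_iff exp_ln)
    with 2 B_large interpret rebuilding_game m d \<gamma> Cr K T B W F
      by unfold_locales auto
    from strategy_within_budget budget_le_linear[OF B_le] 2 show ?case
      by (meson add_right_mono order_trans)
  qed
qed

end
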